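(* For every $k\ge1$ one has $u_{k;0}=b$ and, for all $m\ge0$, $$(b^{m+1}-b+1)\,u_{k;m}=\sum_{j=1}^{m}\binom{m}{j}\Big(\sum_{\substack{0\le a<b\\ a\ne d}}a^j\Big)u_{k;m-j}+\sum_{j=0}^{m}\binom{m}{j}d^j\,u_{k-1;m-j},$$ with the convention $0^0=1$.
   Context: Fix $b\ge2$ and $d\in\{0,\dots,b-1\}$. A string is a finite sequence $X=(d_l,\dots,d_1)$ of digits in $\{0,\dots,b-1\}$ (leading zeros allowed), of length $|X|=l\ge0$; its value is $n(X)=\sum_{i=1}^{l}d_ib^{i-1}$ ($0$ for the empty string). For $k\ge0$, $\mu_k=\sum_{X}b^{-|X|}\delta_{n(X)/b^{|X|}}$, the sum over all strings $X$ containing $d$ exactly $k$ times; it is a finite measure on $[0,1)$ of total mass $b$. The moments are $u_{k;m}=\int_{[0,1)}x^m\,d\mu_k(x)$. *)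

theory Defs
  imports "HOL-Analysis.Analysis"
begin

text \<open>Strings in base b: lists of digits in {0..<b}. A list X = [d_l, ..., d_1]
  (most significant digit first); its value is n(X) = sum_{i=1}^l d_i b^(i-1).\<close>

definition digit_strings :: "nat \<Rightarrow> nat list set" where
  "digit_strings b = {X. set X \<subseteq> {0..<b}}"

definition str_val :: "nat \<Rightarrow> nat list \<Rightarrow> nat" where
  "str_val b X = (\<Sum>i<length X. X ! i * b ^ (length X - 1 - i))"

definition strings_k :: "nat \<Rightarrow> nat \<Rightarrow> nat \<Rightarrow> nat list set" where
  "strings_k b d k = {X \<in> digit_strings b. count_list X d = k}"

text \<open>The moments u_{k;m} = integral of x^m d mu_k(x), where
  mu_k = sum_X b^(-|X|) delta_{n(X)/b^|X|}; for this discrete measure the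
  integral is the (nonnegative, convergent) sum below.\<close>
definition moment :: "nat \<Rightarrow> nat \<Rightarrow> nat \<Rightarrow> nat \<Rightarrow> real" where
  "moment b d k m = (\<Sum>\<^sub>\<infinity>X\<in>strings_k b d k.
      (1 / real b ^ length X) * (real (str_val b X) / real b ^ length X) ^ m)"

end

theory Submission imports Defs begin

text \<open>Splitting off the leading digit of a string \<open>X = a # Y\<close> gives
  \<open>n(X)/b^|X| = (a + n(Y)/b^|Y|)/b\<close> and weight \<open>b^-|X| = b^-|Y|/b\<close>. Since
  \<open>a # Y\<close> contains \<open>d\<close> exactly \<open>k\<close> times iff \<open>Y\<close> contains it \<open>k - 1\<close> times
  (if \<open>a = d\<close>) resp. \<open>k\<close> times (if \<open>a \<noteq> d\<close>), the measure \<open>\<mu>\<^sub>k\<close> is self-similar: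
  it is the image of \<open>\<mu>\<^sub>k\<close> under the maps \<open>x \<mapsto> (a + x)/b\<close>, \<open>a \<noteq> d\<close>, plus the image
  of \<open>\<mu>\<^sub>k\<^sub>-\<^sub>1\<close> under \<open>x \<mapsto> (d + x)/b\<close>, all scaled by \<open>1/b\<close> (plus \<open>\<delta>\<^sub>0\<close> for the
  empty string when \<open>k = 0\<close>). Integrating \<open>x^m\<close> and expanding \<open>(a + x)^m\<close> binomially
  yields the recurrence; its \<open>j = 0\<close> terms with \<open>a \<noteq> d\<close> contribute the
  \<open>(b - 1) u\<^sub>k\<^sub>;\<^sub>m\<close> moved to the left-hand side. The same decomposition, applied to
  strings of bounded length, shows that all masses are at most \<open>b\<close>, so the
  sums converge; for \<open>m = 0\<close> it gives \<open>u\<^sub>0\<^sub>;\<^sub>0 = 1 + (b - 1)/b \<cdot> u\<^sub>0\<^sub>;\<^sub>0\<close> and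
  \<open>u\<^sub>k\<^sub>;\<^sub>0 = u\<^sub>k\<^sub>-\<^sub>1\<^sub>;\<^sub>0\<close>.\<close>

lemma str_val_Cons: "str_val b (a # Y) = a * b ^ length Y + str_val b Y"
proof -
  have "str_val b (a # Y) = (\<Sum>i<Suc (length Y). (a # Y) ! i * b ^ (length Y - i))"
    by (simp add: str_val_def)
  also have "\<dots> = a * b ^ length Y + (\<Sum>i<length Y. Y ! i * b ^ (length Y - 1 - i))"
    by (subst sum.lessThan_Suc_shift) simp
  finally show ?thesis by (simp add: str_val_def)
qed

lemma str_val_less_power:
  assumes "set X \<subseteq> {0..<b}"
  shows "str_val b X < b ^ length X"
  using assms
proof (induction X)
  case Nil
  then show ?case by (simp add: str_val_def)
next
  case (Cons a Y)
  then have "a < b" "str_val b Y < b ^ length Y" by auto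
  then have "a * b ^ length Y + str_val b Y < (a + 1) * b ^ length Y" by simp
  also have "\<dots> \<le> b * b ^ length Y" using \<open>a < b\<close> by (intro mult_right_mono) auto
  finally show ?case by (simp add: str_val_Cons)
qed

lemma Cons_preimage_strings_k:
  assumes "a < b"
  shows "{Y. a # Y \<in> strings_k b d k} =
    (if a = d then (if k = 0 then {} else strings_k b d (k - 1)) else strings_k b d k)"
  using assms by (cases k) (auto simp: strings_k_def digit_strings_def)

lemma Nil_in_strings_k_iff: "[] \<in> strings_k b d k \<longleftrightarrow> k = 0"
  by (auto simp: strings_k_def digit_strings_def)

lemma finite_strings_k_length_less: "finite {X \<in> strings_k b d k. length X < L}"
proof (rule finite_subset)
  show "{X \<in> strings_k b d k. length X < L} \<subseteq> {X. set X \<subseteq> {0..<b} \<and> length X \<le> L}"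
    by (auto simp: strings_k_def digit_strings_def)
  show "finite {X. set X \<subseteq> {0..<b} \<and> length X \<le> L}"
    by (rule finite_lists_length_le) simp
qed

definition moment_summand :: "nat \<Rightarrow> nat \<Rightarrow> nat list \<Rightarrow> real" where
  "moment_summand b m X = (1 / real b ^ length X) * (real (str_val b X) / real b ^ length X) ^ m"

lemma moment_eq_infsum: "moment b d k m = infsum (moment_summand b m) (strings_k b d k)"
  by (simp add: moment_def moment_summand_def[abs_def])

lemma moment_summand_Nil: "moment_summand b m [] = 0 ^ m"
  by (simp add: moment_summand_def str_val_def)

lemma moment_summand_nonneg: "0 \<le> moment_summand b m X"
  by (simp add: moment_summand_def)

lemma moment_summand_le_moment_summand_0:
  assumes "b > 0" "set X \<subseteq> {0..<b}"
  shows "moment_summand b m X \<le> moment_summand b 0 X"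
proof -
  have "real (str_val b X) < real b ^ length X"
    using str_val_less_power[OF assms(2)] by (metis of_nat_less_iff of_nat_power)
  then have "(real (str_val b X) / real b ^ length X) ^ m \<le> 1"
    using assms by (intro power_le_one) auto
  then show ?thesis
    unfolding moment_summand_def by (simp add: divide_right_mono)
qed

lemma moment_summand_Cons:
  assumes "b > 0"
  shows "moment_summand b m (a # Y) =
    (\<Sum>j=0..m. real (m choose j) * real a ^ j * moment_summand b (m - j) Y) / real b ^ (m + 1)"
proof -
  let ?n = "length Y" and ?y = "real (str_val b Y) / real b ^ length Y"
  have "real (str_val b (a # Y)) / real b ^ length (a # Y) = (real a + ?y) / real b"
    using assms by (simp add: str_val_Cons field_simps)
  then have "moment_summand b m (a # Y) = (1 / real b ^ ?n) * (real a + ?y) ^ m / real b ^ (m + 1)"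
    by (simp add: moment_summand_def power_divide)
  also have "(real a + ?y) ^ m = (\<Sum>j=0..m. real (m choose j) * real a ^ j * ?y ^ (m - j))"
    by (simp add: binomial_ring atLeast0AtMost)
  finally show ?thesis
    by (simp add: moment_summand_def sum_distrib_left algebra_simps)
qed

lemma moment_summand_0_Cons: "b > 0 \<Longrightarrow> moment_summand b 0 (a # Y) = moment_summand b 0 Y / real b"
  by (simp add: moment_summand_Cons)

lemma has_sum_sum:
  fixes f :: "'i \<Rightarrow> 'a \<Rightarrow> 'b::topological_comm_monoid_add"
  assumes "finite I" "\<And>i. i \<in> I \<Longrightarrow> (f i has_sum s i) A"
  shows "((\<lambda>x. \<Sum>i\<in>I. f i x) has_sum (\<Sum>i\<in>I. s i)) A"
  using assms
proof (induction I rule: finite_induct)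
  case empty
  then show ?case by simp
next
  case (insert i I)
  then have "((\<lambda>x. f i x + (\<Sum>i\<in>I. f i x)) has_sum (s i + (\<Sum>i\<in>I. s i))) A"
    by (intro has_sum_add) auto
  then show ?case using insert.hyps by simp
qed

lemma has_sum_split_head:
  fixes g :: "nat list \<Rightarrow> 'a::topological_comm_monoid_add"
  assumes "S \<subseteq> digit_strings b"
    and "\<And>a. a < b \<Longrightarrow> ((\<lambda>Y. g (a # Y)) has_sum s a) {Y. a # Y \<in> S}"
  shows "(g has_sum (\<Sum>a<b. s a)) (S - {[]})"
proof -
  have "S - {[]} = (\<Union>a<b. Cons a ` {Y. a # Y \<in> S})"
  proof (intro equalityI subsetI)
    fix X assume X: "X \<in> S - {[]}"
    then obtain a Y where XY: "X = a # Y" by (cases X) auto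
    with X assms(1) have "a < b" by (auto simp: digit_strings_def)
    with X XY show "X \<in> (\<Union>a<b. Cons a ` {Y. a # Y \<in> S})" by blast
  qed auto
  moreover have "(g has_sum (\<Sum>a<b. s a)) (\<Union>a<b. Cons a ` {Y. a # Y \<in> S})"
  proof (rule sum_has_sum)
    fix a assume "a \<in> {..<b}"
    then show "(g has_sum s a) (Cons a ` {Y. a # Y \<in> S})"
      using assms(2) by (subst has_sum_reindex) (auto simp: o_def)
  qed auto
  ultimately show ?thesis by simp
qed

lemma sum_split_head:
  fixes g :: "nat list \<Rightarrow> real"
  assumes "finite S" "S \<subseteq> digit_strings b"
  shows "sum g S = (if [] \<in> S then g [] else 0) + (\<Sum>a<b. \<Sum>Y | a # Y \<in> S. g (a # Y))"
proof -
  have "finite (Cons a -` S)" for a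
    using assms(1) by (rule finite_vimageI) simp
  then have "(g has_sum (\<Sum>a<b. \<Sum>Y | a # Y \<in> S. g (a # Y))) (S - {[]})"
    by (intro has_sum_split_head[OF assms(2)] has_sum_finite) (simp add: vimage_def)
  then have "sum g (S - {[]}) = (\<Sum>a<b. \<Sum>Y | a # Y \<in> S. g (a # Y))"
    using assms(1) by (simp add: has_sum_iff)
  moreover have "sum g S = (if [] \<in> S then g [] else 0) + sum g (S - {[]})"
    using assms(1) sum.remove[of S "[]" g] by (cases "[] \<in> S") simp_all
  ultimately show ?thesis by simp
qed

lemma sum_moment_summand_0_length_less_le:
  assumes "b \<ge> 2" "d < b"
  shows "(\<Sum>X | X \<in> strings_k b d k \<and> length X < L. moment_summand b 0 X) \<le> real b"
proof (induction L arbitrary: k)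
  case 0
  then show ?case by simp
next
  case (Suc L)
  define S where "S = {X \<in> strings_k b d k. length X < Suc L}"
  have piece: "(\<Sum>Y | a # Y \<in> S. moment_summand b 0 (a # Y)) \<le> (if a = d \<and> k = 0 then 0 else 1)"
    if "a < b" for a
  proof -
    define k' where "k' = (if a = d then k - 1 else k)"
    have "{Y. a # Y \<in> S} = {Y. a # Y \<in> strings_k b d k} \<inter> {Y. length Y < L}"
      by (auto simp: S_def)
    also have "\<dots> = (if a = d \<and> k = 0 then {} else {Y \<in> strings_k b d k'. length Y < L})"
      unfolding Cons_preimage_strings_k[OF that] k'_def by auto
    finally have "{Y. a # Y \<in> S} = \<dots>" .
    then have le: "(\<Sum>Y | a # Y \<in> S. moment_summand b 0 Y) \<le> (if a = d \<and> k = 0 then 0 else real b)"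
      using Suc.IH[of k'] by simp
    have eq: "(\<Sum>Y | a # Y \<in> S. moment_summand b 0 (a # Y)) =
        (\<Sum>Y | a # Y \<in> S. moment_summand b 0 Y) / real b"
      using assms by (simp add: moment_summand_0_Cons sum_divide_distrib)
    show ?thesis
    proof (cases "a = d \<and> k = 0")
      case True
      then show ?thesis using le unfolding eq by (simp add: divide_nonpos_nonneg)
    next
      case False
      then show ?thesis using le assms unfolding eq if_not_P[OF False] by (simp add: divide_le_eq)
    qed
  qed
  have "(\<Sum>a<b. (if a = d \<and> k = 0 then 0 else 1::real)) = real b - (if k = 0 then 1 else 0)"
    using assms by (simp add: sum.If_cases flip: Diff_eq)
  moreover have "sum (moment_summand b 0) S =
      (if k = 0 then 1 else 0) + (\<Sum>a<b. \<Sum>Y | a # Y \<in> S. moment_summand b 0 (a # Y))"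
  proof -
    have "finite S" "S \<subseteq> digit_strings b" "[] \<in> S \<longleftrightarrow> k = 0"
      unfolding S_def using finite_strings_k_length_less Nil_in_strings_k_iff[of b d k]
      by (auto simp: strings_k_def)
    then show ?thesis by (simp add: sum_split_head moment_summand_Nil)
  qed
  moreover have "(\<Sum>a<b. \<Sum>Y | a # Y \<in> S. moment_summand b 0 (a # Y)) \<le>
      (\<Sum>a<b. (if a = d \<and> k = 0 then 0 else 1::real))"
    by (intro sum_mono piece) simp
  ultimately have "sum (moment_summand b 0) S \<le> real b" by linarith
  then show ?case unfolding S_def .
qed

lemma moment_summand_summable_on_strings_k:
  assumes "b \<ge> 2" "d < b"
  shows "moment_summand b m summable_on strings_k b d k"
proof (rule summable_on_comparison_test)
  show "moment_summand b 0 summable_on strings_k b d k"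
  proof (rule nonneg_bdd_above_summable_on)
    show "bdd_above (sum (moment_summand b 0) ` {F. F \<subseteq> strings_k b d k \<and> finite F})"
    proof (rule bdd_aboveI, clarify)
      fix F assume F: "F \<subseteq> strings_k b d k" "finite F"
      define L where "L = Suc (\<Sum>X\<in>F. length X)"
      have "F \<subseteq> {X \<in> strings_k b d k. length X < L}"
        using F unfolding L_def by (auto intro: member_le_sum le_imp_less_Suc)
      then have "sum (moment_summand b 0) F \<le> sum (moment_summand b 0) {X \<in> strings_k b d k. length X < L}"
        by (intro sum_mono2 finite_strings_k_length_less) (auto simp: moment_summand_nonneg)
      also have "\<dots> \<le> real b"
        using sum_moment_summand_0_length_less_le[OF assms] by simp
      finally show "sum (moment_summand b 0) F \<le> real b" .
    qed
  qed (simp add: moment_summand_nonneg)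
qed (use assms in \<open>auto simp: moment_summand_nonneg strings_k_def digit_strings_def
                            intro!: moment_summand_le_moment_summand_0\<close>)

lemma moment_summand_summable_on_Cons_preimage:
  assumes "b \<ge> 2" "d < b" "a < b"
  shows "moment_summand b m summable_on {Y. a # Y \<in> strings_k b d k}"
  using Cons_preimage_strings_k[OF assms(3), of d k] moment_summand_summable_on_strings_k[OF assms(1,2)]
  by auto

lemma infsum_moment_summand_split_head:
  assumes "b > 0" "S \<subseteq> digit_strings b"
    and summable: "\<And>a i. a < b \<Longrightarrow> moment_summand b i summable_on {Y. a # Y \<in> S}"
  shows "infsum (moment_summand b m) (S - {[]}) =
    (\<Sum>a<b. \<Sum>j=0..m. real (m choose j) * real a ^ j *
        infsum (moment_summand b (m - j)) {Y. a # Y \<in> S}) / real b ^ (m + 1)"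
proof -
  have "(moment_summand b m has_sum (\<Sum>a<b. (\<Sum>j=0..m. real (m choose j) * real a ^ j *
          infsum (moment_summand b (m - j)) {Y. a # Y \<in> S}) / real b ^ (m + 1))) (S - {[]})"
  proof (rule has_sum_split_head[OF assms(2)])
    fix a assume "a < b"
    then have "((\<lambda>Y. (\<Sum>j=0..m. real (m choose j) * real a ^ j * moment_summand b (m - j) Y)
                / real b ^ (m + 1)) has_sum
          (\<Sum>j=0..m. real (m choose j) * real a ^ j * infsum (moment_summand b (m - j)) {Y. a # Y \<in> S})
            / real b ^ (m + 1)) {Y. a # Y \<in> S}"
      using summable by (intro has_sum_divide_const has_sum_sum has_sum_cmult_right) auto
    then show "((\<lambda>Y. moment_summand b m (a # Y)) has_sum
          (\<Sum>j=0..m. real (m choose j) * real a ^ j * infsum (moment_summand b (m - j)) {Y. a # Y \<in> S})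
            / real b ^ (m + 1)) {Y. a # Y \<in> S}"
      using assms(1) by (simp only: moment_summand_Cons)
  qed
  then show ?thesis
    by (simp add: has_sum_iff sum_divide_distrib)
qed

lemma infsum_Cons_preimage_strings_k:
  assumes "a < b"
  shows "infsum (moment_summand b m) {Y. a # Y \<in> strings_k b d k} =
    (if a = d then (if k = 0 then 0 else moment b d (k - 1) m) else moment b d k m)"
  using Cons_preimage_strings_k[OF assms, of d k] by (simp add: moment_eq_infsum)

lemma moment_split_head:
  assumes "b \<ge> 2" "d < b" "k \<ge> 1"
  shows "real b ^ (m + 1) * moment b d k m =
    (\<Sum>a<b. \<Sum>j=0..m. real (m choose j) * real a ^ j * moment b d (if a = d then k - 1 else k) (m - j))"
proof -
  have "strings_k b d k - {[]} = strings_k b d k"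
    using assms(3) Nil_in_strings_k_iff[of b d k] by auto
  then have "moment b d k m = (\<Sum>a<b. \<Sum>j=0..m. real (m choose j) * real a ^ j *
        infsum (moment_summand b (m - j)) {Y. a # Y \<in> strings_k b d k}) / real b ^ (m + 1)"
    using infsum_moment_summand_split_head[of b "strings_k b d k" m] assms
      moment_summand_summable_on_Cons_preimage
    by (simp add: moment_eq_infsum strings_k_def)
  also have "\<dots> = (\<Sum>a<b. \<Sum>j=0..m. real (m choose j) * real a ^ j *
        moment b d (if a = d then k - 1 else k) (m - j)) / real b ^ (m + 1)"
    using assms(3) by (intro arg_cong2[where f = "(/)"] sum.cong refl)
      (simp add: infsum_Cons_preimage_strings_k)
  finally show ?thesis
    using assms(1) by (simp add: field_simps)
qed

lemma moment_recurrence: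
  assumes "b \<ge> 2" "d < b" "k \<ge> 1"
  shows "(real b ^ (m + 1) - real b + 1) * moment b d k m =
       (\<Sum>j=1..m. real (m choose j) * (\<Sum>a\<in>{0..<b} - {d}. real a ^ j) * moment b d k (m - j))
     + (\<Sum>j=0..m. real (m choose j) * real d ^ j * moment b d (k - 1) (m - j))"
proof -
  define u where "u i = moment b d k i" for i
  define A where "A = {0..<b} - {d}"
  define F where "F a = (\<Sum>j=0..m. real (m choose j) * real a ^ j *
      moment b d (if a = d then k - 1 else k) (m - j))" for a
  have F_A: "F a = u m + (\<Sum>j=1..m. real (m choose j) * real a ^ j * u (m - j))" if "a \<in> A" for a
    using that by (simp add: F_def A_def u_def sum.atLeast_Suc_atMost)
  have "real b ^ (m + 1) * u m = F d + (\<Sum>a\<in>A. F a)"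
    using moment_split_head[OF assms, of m] assms(2)
    by (simp add: u_def F_def A_def atLeast0LessThan sum.remove)
  also have "(\<Sum>a\<in>A. F a) = real (card A) * u m +
      (\<Sum>j=1..m. real (m choose j) * (\<Sum>a\<in>A. real a ^ j) * u (m - j))"
    by (simp add: F_A sum.distrib sum.swap[of _ A] sum_distrib_left sum_distrib_right mult_ac)
  also have "real (card A) = real b - 1"
    using assms(2) by (simp add: A_def)
  finally show ?thesis
    by (simp add: F_def u_def A_def algebra_simps)
qed

lemma moment_0_0:
  assumes "b \<ge> 2" "d < b"
  shows "moment b d 0 0 = real b"
proof -
  define S where "S = strings_k b d 0"
  define U where "U = moment b d 0 0"
  have S: "S \<subseteq> digit_strings b" "[] \<in> S"
    using Nil_in_strings_k_iff[of b d 0] by (auto simp: S_def strings_k_def)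
  have "moment_summand b 0 summable_on S - {[]}"
    using moment_summand_summable_on_strings_k[OF assms]
    by (rule summable_on_subset_banach) (auto simp: S_def)
  then have "U = moment_summand b 0 [] + infsum (moment_summand b 0) (S - {[]})"
    using infsum_insert[of "moment_summand b 0" "S - {[]}" "[]"] S(2)
    by (simp add: U_def S_def moment_eq_infsum insert_absorb)
  also have "infsum (moment_summand b 0) (S - {[]}) = (\<Sum>a<b. if a = d then 0 else U) / real b"
    unfolding U_def
    using infsum_moment_summand_split_head[of b S 0] assms S(1)
      moment_summand_summable_on_Cons_preimage[OF assms]
    by (simp add: S_def infsum_Cons_preimage_strings_k)
  also have "(\<Sum>a<b. if a = d then 0 else U) = (real b - 1) * U"
    using assms by (simp add: sum.If_cases flip: Diff_eq)
  finally have "real b * U = real b + (real b - 1) * U"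
    using assms by (simp add: moment_summand_Nil field_simps)
  then show ?thesis
    by (simp add: U_def algebra_simps)
qed

lemma moment_0:
  assumes "b \<ge> 2" "d < b"
  shows "moment b d k 0 = real b"
proof (induction k)
  case 0
  show ?case using moment_0_0[OF assms] .
next
  case (Suc k)
  then show ?case using moment_recurrence[OF assms, of "Suc k" 0] by simp
qed

theorem mainTheorem10:
  fixes b d k :: nat
  assumes "b \<ge> 2" and "d < b" and "k \<ge> 1"
  shows "moment b d k 0 = real b \<and>
    (\<forall>m::nat. (real b ^ (m + 1) - real b + 1) * moment b d k m =
       (\<Sum>j=1..m. real (m choose j) * (\<Sum>a\<in>{0..<b} - {d}. real a ^ j) * moment b d k (m - j))
     + (\<Sum>j=0..m. real (m choose j) * real d ^ j * moment b d (k - 1) (m - j)))"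
  using moment_0[OF assms(1,2)] moment_recurrence[OF assms] by blast

end
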